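(* Let $\Omega$ be a finite set with $n$ elements and let $G \le \mathrm{Sym}(\Omega)$ be $t$-transitive with $t\ge 3$, such that $G$ does not contain $\mathrm{Alt}(\Omega)$. Let $m$ be the minimal degree of $G$. If $n \ge 23$, then $m \ge n/3$.
   Context: $G$ is $t$-transitive if it acts transitively on ordered $t$-tuples of distinct points of $\Omega$. The minimal degree of $G$ is $m=\min\{|\mathrm{supp}(u)| \mid u\in G,\ u\neq 1\}$, where $\mathrm{supp}(u)=\{\alpha\in\Omega\mid \alpha^u\ne\alpha\}$. *)

theory Defs
  imports Complex_Main "HOL-Combinatorics.Permutations"
begin

definition perm_group :: "'a set \<Rightarrow> ('a \<Rightarrow> 'a) set \<Rightarrow> bool" where
  "perm_group \<Omega> G \<longleftrightarrow>
     (\<forall>g\<in>G. g permutes \<Omega>) \<and> id \<in> G \<and>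
     (\<forall>g\<in>G. \<forall>h\<in>G. g \<circ> h \<in> G) \<and> (\<forall>g\<in>G. inv g \<in> G)"

definition alt_set :: "'a set \<Rightarrow> ('a \<Rightarrow> 'a) set" where
  "alt_set \<Omega> = {p. p permutes \<Omega> \<and> evenperm p}"

definition t_transitive :: "nat \<Rightarrow> 'a set \<Rightarrow> ('a \<Rightarrow> 'a) set \<Rightarrow> bool" where
  "t_transitive t \<Omega> G \<longleftrightarrow>
     (\<forall>xs ys. length xs = t \<and> length ys = t \<and> distinct xs \<and> distinct ys \<and>
        set xs \<subseteq> \<Omega> \<and> set ys \<subseteq> \<Omega> \<longrightarrow> (\<exists>g\<in>G. map g xs = ys))"

definition supp :: "'a set \<Rightarrow> ('a \<Rightarrow> 'a) \<Rightarrow> 'a set" where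
  "supp \<Omega> u = {\<alpha>\<in>\<Omega>. u \<alpha> \<noteq> \<alpha>}"

definition minimal_degree :: "'a set \<Rightarrow> ('a \<Rightarrow> 'a) set \<Rightarrow> nat" where
  "minimal_degree \<Omega> G = Min {card (supp \<Omega> u) | u. u \<in> G \<and> u \<noteq> id}"

end

theory Submission
  imports Defs
begin

text \<open>
  Let \<open>u\<close> be a non-identity element of minimal degree \<open>m\<close> with support \<open>S\<close>, and suppose
  \<open>3 m < n\<close>. If \<open>m \<le> 3\<close> then \<open>u\<close> is a transposition or a 3-cycle, and by 3-transitivity \<open>G\<close>
  contains all 3-cycles and hence \<open>Alt(\<Omega>)\<close>; so \<open>m \<ge> 4\<close>.

  Fix \<open>\<alpha> \<in> S\<close> and \<open>\<gamma> \<notin> S\<close>, and let \<open>g\<close> range over the set \<open>C\<close> of elements of \<open>G\<close> that fix \<open>\<alpha>\<close>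
  and send \<open>\<gamma>\<close> to \<open>u \<alpha>\<close>. Then \<open>v = g\<^sup>-\<^sup>1 u g\<close> sends \<open>\<alpha>\<close> to a fixed point of \<open>u\<close>, so the
  commutator \<open>[u, v]\<close> is not the identity, while its support lies in \<open>D \<union> u D \<union> v D\<close> for
  \<open>D = S \<inter> g\<^sup>-\<^sup>1 S\<close>. Minimality of \<open>m\<close> gives \<open>m + [g (u \<alpha>) \<in> S] + [g (u\<^sup>-\<^sup>1 \<alpha>) \<in> S] \<le> 3 |D|\<close>.
  By 3-transitivity the elements of \<open>C\<close> send each point outside \<open>{\<alpha>, \<gamma>}\<close> equally often to
  each point outside \<open>{\<alpha>, u \<alpha>}\<close>, so averaging over \<open>C\<close> yields
  \<open>m (n - 2) + 2 (m - 2) \<le> 3 ((n - 2) + (m - 1) (m - 2))\<close>, which fails for \<open>4 \<le> m < n / 3\<close>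
  once \<open>n \<ge> 23\<close>.
\<close>

section \<open>Supports and commutators of permutations\<close>

lemma conj_transpose:
  assumes "bij g"
  shows "g \<circ> transpose a b \<circ> inv g = transpose (g a) (g b)"
proof
  fix x
  have "transpose (g a) (g b) (g (inv g x)) = g (transpose a b (inv g x))"
    using assms by (simp add: transpose_apply_commute bij_is_inj)
  then show "(g \<circ> transpose a b \<circ> inv g) x = transpose (g a) (g b) x"
    using assms by (simp add: bij_is_surj surj_f_inv_f)
qed

lemma permutes_fixes_iff_notin_supp:
  assumes "u permutes \<Omega>"
  shows "u x = x \<longleftrightarrow> x \<notin> supp \<Omega> u"
  using assms unfolding supp_def by (auto simp: permutes_not_in)

lemma permutes_mem_supp_iff:
  assumes "u permutes \<Omega>"
  shows "u x \<in> supp \<Omega> u \<longleftrightarrow> x \<in> supp \<Omega> u"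
  using permutes_fixes_iff_notin_supp[OF assms] permutes_inj[OF assms]
  by (metis injD)

lemma supp_conj:
  assumes "g permutes \<Omega>" "u permutes \<Omega>"
  shows "supp \<Omega> (inv g \<circ> u \<circ> g) = {x \<in> \<Omega>. g x \<in> supp \<Omega> u}"
  using assms unfolding supp_def
  by (auto simp: permutes_inv_eq permutes_in_image)

definition commutator :: "('a \<Rightarrow> 'a) \<Rightarrow> ('a \<Rightarrow> 'a) \<Rightarrow> 'a \<Rightarrow> 'a" where
  "commutator u v = u \<circ> v \<circ> inv u \<circ> inv v"

lemma supp_commutator_subset:
  assumes u: "u permutes \<Omega>" and v: "v permutes \<Omega>"
  defines "D \<equiv> supp \<Omega> u \<inter> supp \<Omega> v"
  shows "supp \<Omega> (commutator u v) \<subseteq> D \<union> u ` D \<union> v ` D"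
proof
  fix x
  assume x: "x \<in> supp \<Omega> (commutator u v)"
  note u_fix = permutes_fixes_iff_notin_supp[OF u] and v_fix = permutes_fixes_iff_notin_supp[OF v]
  show "x \<in> D \<union> u ` D \<union> v ` D"
  proof (rule ccontr)
    assume x_notin: "x \<notin> D \<union> u ` D \<union> v ` D"
    consider (u_moves) "x \<in> supp \<Omega> u" "x \<notin> supp \<Omega> v"
      | (v_moves) "x \<notin> supp \<Omega> u" "x \<in> supp \<Omega> v"
      | (fixed) "x \<notin> supp \<Omega> u" "x \<notin> supp \<Omega> v"
      using x_notin D_def by blast
    then have "u (v (inv u (inv v x))) = x"
    proof cases
      case u_moves
      define y where "y = inv u x"
      have "u y = x" using u by (simp add: y_def permutes_inverses)
      then have "y \<in> supp \<Omega> u" using u_moves(1) u_fix by metis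
      moreover have "y \<notin> D" using x_notin \<open>u y = x\<close> by blast
      ultimately have "v y = y" using D_def v_fix by blast
      moreover have "inv v x = x" using u_moves(2) v_fix permutes_inv_eq[OF v] by metis
      ultimately show ?thesis using \<open>u y = x\<close> y_def by simp
    next
      case v_moves
      define z where "z = inv v x"
      have "v z = x" using v by (simp add: z_def permutes_inverses)
      then have "z \<in> supp \<Omega> v" using v_moves(2) v_fix by metis
      moreover have "z \<notin> D" using x_notin \<open>v z = x\<close> by blast
      ultimately have "inv u z = z" using D_def u_fix permutes_inv_eq[OF u] by blast
      then show ?thesis using v_moves(1) u_fix \<open>v z = x\<close> z_def by simp
    next
      case fixed
      then have "u x = x" "v x = x" "inv u x = x" "inv v x = x"
        using u_fix v_fix permutes_inv_eq[OF u] permutes_inv_eq[OF v] by metis+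
      then show ?thesis by simp
    qed
    then show False using x unfolding supp_def commutator_def by simp
  qed
qed

lemma card_supp_commutator_le:
  assumes "finite \<Omega>" and u: "u permutes \<Omega>" and v: "v permutes \<Omega>"
  defines "D \<equiv> supp \<Omega> u \<inter> supp \<Omega> v"
  shows "card (supp \<Omega> (commutator u v)) + card (D \<inter> u ` D) \<le> 3 * card D"
proof -
  have "finite D" using assms(1) by (simp add: D_def supp_def)
  have "card (supp \<Omega> (commutator u v)) \<le> card (D \<union> u ` D \<union> v ` D)"
    using supp_commutator_subset[OF u v] \<open>finite D\<close> by (intro card_mono) (auto simp: D_def)
  also have "\<dots> \<le> card (D \<union> u ` D) + card (v ` D)"
    by (rule card_Un_le)
  also have "\<dots> \<le> card (D \<union> u ` D) + card D"
    using card_image_le[OF \<open>finite D\<close>] by simp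
  also have "card (D \<union> u ` D) + card (D \<inter> u ` D) = 2 * card D"
    using card_Un_Int[of D "u ` D"] \<open>finite D\<close> card_image[OF inj_on_subset[OF permutes_inj[OF u]]]
    by simp
  ultimately show ?thesis by linarith
qed

lemma commutator_neq_id:
  assumes u: "u permutes \<Omega>" and v: "v permutes \<Omega>"
    and "u \<alpha> \<noteq> \<alpha>" "u (v \<alpha>) = v \<alpha>"
  shows "commutator u v \<noteq> id"
proof
  assume "commutator u v = id"
  moreover have "commutator u v (v (u \<alpha>)) = v \<alpha>"
    using assms(4) by (simp add: commutator_def permutes_inverses[OF u] permutes_inverses[OF v])
  ultimately have "v (u \<alpha>) = v \<alpha>" by simp
  then show False using assms(3) permutes_inj[OF v] by (metis injD)
qed

lemma perm_eq_transpose_if_small_support: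
  assumes u: "u permutes \<Omega>" and "finite \<Omega>" and small: "card (supp \<Omega> u) \<le> 3"
    and \<alpha>: "\<alpha> \<in> supp \<Omega> u" "u (u \<alpha>) = \<alpha>"
  shows "u = transpose \<alpha> (u \<alpha>)"
proof -
  let ?S = "supp \<Omega> u"
  note fix_iff = permutes_fixes_iff_notin_supp[OF u] and mem_iff = permutes_mem_supp_iff[OF u]
  have "finite ?S" using \<open>finite \<Omega>\<close> by (simp add: supp_def)
  have "u \<alpha> \<in> ?S" "u \<alpha> \<noteq> \<alpha>" using \<alpha>(1) mem_iff fix_iff by auto
  have "c \<in> {\<alpha>, u \<alpha>}" if c: "c \<in> ?S" for c
  proof (rule ccontr)
    assume c_other: "c \<notin> {\<alpha>, u \<alpha>}"
    have "u c \<noteq> c" "u c \<in> ?S" using c fix_iff[of c] mem_iff[of c] by simp_all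
    moreover have "u c \<noteq> u (u \<alpha>)" "u c \<noteq> u \<alpha>"
      using c_other permutes_inj[OF u] by (auto dest: injD)
    ultimately have "distinct [\<alpha>, u \<alpha>, c, u c]" "set [\<alpha>, u \<alpha>, c, u c] \<subseteq> ?S"
      using \<alpha> c_other \<open>u \<alpha> \<noteq> \<alpha>\<close> \<open>u \<alpha> \<in> ?S\<close> c by auto
    then have "4 \<le> card ?S"
      using card_mono[OF \<open>finite ?S\<close>, of "set [\<alpha>, u \<alpha>, c, u c]"] distinct_card by force
    then show False using small by simp
  qed
  then have fixed: "u x = x" if "x \<notin> {\<alpha>, u \<alpha>}" for x
    using that fix_iff by blast
  have "u x = transpose \<alpha> (u \<alpha>) x" for x
  proof (cases "x \<in> {\<alpha>, u \<alpha>}")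
    case True
    then show ?thesis using \<alpha>(2) by auto
  next
    case False
    then show ?thesis using fixed[OF False] by simp
  qed
  then show ?thesis by (rule ext)
qed

lemma perm_eq_three_cycle_if_small_support:
  assumes u: "u permutes \<Omega>" and "finite \<Omega>" and small: "card (supp \<Omega> u) \<le> 3"
    and \<alpha>: "\<alpha> \<in> supp \<Omega> u" and distinct: "distinct [\<alpha>, u \<alpha>, u (u \<alpha>)]"
  shows "u = transpose \<alpha> (u (u \<alpha>)) \<circ> transpose \<alpha> (u \<alpha>)"
proof -
  let ?S = "supp \<Omega> u"
  note fix_iff = permutes_fixes_iff_notin_supp[OF u] and mem_iff = permutes_mem_supp_iff[OF u]
  have inj: "u x = u y \<longleftrightarrow> x = y" for x y using permutes_inj[OF u] by (meson injD)
  have "finite ?S" using \<open>finite \<Omega>\<close> by (simp add: supp_def)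
  have "u \<alpha> \<in> ?S" "u (u \<alpha>) \<in> ?S" using \<alpha> mem_iff by simp_all
  have S_eq: "?S = {\<alpha>, u \<alpha>, u (u \<alpha>)}"
  proof (rule card_seteq[symmetric])
    show "{\<alpha>, u \<alpha>, u (u \<alpha>)} \<subseteq> ?S" using \<alpha> \<open>u \<alpha> \<in> ?S\<close> \<open>u (u \<alpha>) \<in> ?S\<close> by simp
    show "card ?S \<le> card {\<alpha>, u \<alpha>, u (u \<alpha>)}" using small distinct by simp
  qed (use \<open>finite ?S\<close> in simp)
  have neq: "\<alpha> \<noteq> u \<alpha>" "u \<alpha> \<noteq> \<alpha>" "\<alpha> \<noteq> u (u \<alpha>)" "u (u \<alpha>) \<noteq> \<alpha>"
    "u \<alpha> \<noteq> u (u \<alpha>)" "u (u \<alpha>) \<noteq> u \<alpha>"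
    using distinct by auto
  have "u (u (u \<alpha>)) \<in> ?S" using \<open>u (u \<alpha>) \<in> ?S\<close> mem_iff[of "u (u \<alpha>)"] by blast
  moreover have "u (u (u \<alpha>)) \<noteq> u \<alpha>" using neq inj[of "u (u \<alpha>)" \<alpha>] by simp
  moreover have "u (u (u \<alpha>)) \<noteq> u (u \<alpha>)" using neq inj[of "u (u \<alpha>)" "u \<alpha>"] by simp
  ultimately have "u (u (u \<alpha>)) = \<alpha>" using S_eq by blast
  have "u x = (transpose \<alpha> (u (u \<alpha>)) \<circ> transpose \<alpha> (u \<alpha>)) x" for x
  proof -
    consider "x = \<alpha>" | "x = u \<alpha>" | "x = u (u \<alpha>)" | "x \<notin> {\<alpha>, u \<alpha>, u (u \<alpha>)}" by blast
    then show ?thesis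
    proof cases
      case 4
      then show ?thesis using fix_iff S_eq by simp
    qed (use neq \<open>u (u (u \<alpha>)) = \<alpha>\<close> in simp_all)
  qed
  then show ?thesis by (rule ext)
qed

lemma small_support_perm_cases:
  assumes u: "u permutes \<Omega>" and "finite \<Omega>" and small: "card (supp \<Omega> u) \<le> 3"
    and \<alpha>: "\<alpha> \<in> supp \<Omega> u"
  obtains (transposition) "u = transpose \<alpha> (u \<alpha>)"
    | (three_cycle) "distinct [\<alpha>, u \<alpha>, u (u \<alpha>)]" "u = transpose \<alpha> (u (u \<alpha>)) \<circ> transpose \<alpha> (u \<alpha>)"
proof (cases "u (u \<alpha>) = \<alpha>")
  case True
  then show thesis using perm_eq_transpose_if_small_support[OF assms] transposition by blast
next
  case False
  have "u \<alpha> \<noteq> \<alpha>" using \<alpha> permutes_fixes_iff_notin_supp[OF u] by blast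
  moreover have "u (u \<alpha>) \<noteq> u \<alpha>" using \<open>u \<alpha> \<noteq> \<alpha>\<close> permutes_inj[OF u] by (metis injD)
  ultimately have "distinct [\<alpha>, u \<alpha>, u (u \<alpha>)]" using False by auto
  then show thesis using perm_eq_three_cycle_if_small_support[OF assms] three_cycle by blast
qed

lemma distinct_list_extend:
  assumes "finite A" "distinct xs" "set xs \<subseteq> A" "length xs \<le> k" "k \<le> card A"
  obtains zs where "distinct (xs @ zs)" "set zs \<subseteq> A" "length (xs @ zs) = k"
proof -
  obtain ws where ws: "set ws = A - set xs" "distinct ws"
    using finite_distinct_list[of "A - set xs"] assms(1) by blast
  have "length ws = card A - length xs"
    using distinct_card[OF ws(2)] ws(1) assms(1-3) by (simp add: card_Diff_subset distinct_card)
  then show ?thesis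
    using that[of "take (k - length xs) ws"] ws assms(2,4,5) by (auto dest: in_set_takeD)
qed

lemma t_transitiveE:
  assumes "t_transitive t \<Omega> G" "length xs = t" "length ys = t" "distinct xs" "distinct ys"
    "set xs \<subseteq> \<Omega>" "set ys \<subseteq> \<Omega>"
  obtains g where "g \<in> G" "map g xs = ys"
  using assms unfolding t_transitive_def by blast

lemma t_transitive_mono:
  assumes "t_transitive t \<Omega> G" "s \<le> t" "t \<le> card \<Omega>" "finite \<Omega>"
  shows "t_transitive s \<Omega> G"
  unfolding t_transitive_def
proof (intro allI impI)
  fix xs ys :: "'a list"
  assume "length xs = s \<and> length ys = s \<and> distinct xs \<and> distinct ys \<and> set xs \<subseteq> \<Omega> \<and> set ys \<subseteq> \<Omega>"
  then have xs: "length xs = s" "distinct xs" "set xs \<subseteq> \<Omega>"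
    and ys: "length ys = s" "distinct ys" "set ys \<subseteq> \<Omega>" by auto
  obtain xs' where xs': "distinct (xs @ xs')" "set xs' \<subseteq> \<Omega>" "length (xs @ xs') = t"
    using distinct_list_extend[OF assms(4) xs(2,3)] xs(1) assms(2,3) by metis
  obtain ys' where ys': "distinct (ys @ ys')" "set ys' \<subseteq> \<Omega>" "length (ys @ ys') = t"
    using distinct_list_extend[OF assms(4) ys(2,3)] ys(1) assms(2,3) by metis
  obtain g where "g \<in> G" "map g (xs @ xs') = ys @ ys'"
    using t_transitiveE[OF assms(1) xs'(3) ys'(3) xs'(1) ys'(1)] xs'(2) ys'(2) xs(3) ys(3) by auto
  then show "\<exists>g\<in>G. map g xs = ys"
    using xs(1) ys(1) by (auto simp: append_eq_append_conv)
qed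

lemma three_transitiveE:
  assumes "t_transitive 3 \<Omega> G" "a \<in> \<Omega>" "b \<in> \<Omega>" "c \<in> \<Omega>" "distinct [a, b, c]"
    "x \<in> \<Omega>" "y \<in> \<Omega>" "z \<in> \<Omega>" "distinct [x, y, z]"
  obtains g where "g \<in> G" "g a = x" "g b = y" "g c = z"
  using t_transitiveE[OF assms(1), of "[a, b, c]" "[x, y, z]"] assms(2-) by auto

lemma ex_not_mem_if_card_less:
  assumes "finite B" "card B < card A"
  obtains x where "x \<in> A" "x \<notin> B"
  using assms card_mono leD by blast

lemma three_distinct_points:
  assumes "3 \<le> card A"
  obtains a b c where "a \<in> A" "b \<in> A" "c \<in> A" "distinct [a, b, c]"
proof -
  obtain a where a: "a \<in> A" using assms by fastforce
  have "finite {a}" "card {a} < card A" using assms by simp_all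
  then obtain b where b: "b \<in> A" "b \<notin> {a}" by (rule ex_not_mem_if_card_less)
  have "finite {a, b}" "card {a, b} < card A" using assms b(2) by simp_all
  then obtain c where c: "c \<in> A" "c \<notin> {a, b}" by (rule ex_not_mem_if_card_less)
  show ?thesis using that a b c by simp
qed

lemma of_bool_add_of_bool_le_card:
  assumes "finite A" "a \<noteq> b" "P \<Longrightarrow> a \<in> A" "Q \<Longrightarrow> b \<in> A"
  shows "of_bool P + of_bool Q \<le> card A"
proof -
  have "of_bool P + of_bool Q = card ({x \<in> {a}. P} \<union> {x \<in> {b}. Q})"
    using assms(2) by (cases P; cases Q) auto
  also have "\<dots> \<le> card A"
    using assms by (intro card_mono) auto
  finally show ?thesis .
qed

lemma card_filter_eq_sum_of_bool:
  assumes "finite A"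
  shows "card {a \<in> A. P a} = (\<Sum>a\<in>A. of_bool (P a))"
  using sum.inter_filter[OF assms, of "\<lambda>_. 1 :: nat" P] by (simp add: of_bool_def)

lemma sum_card_filter_swap:
  assumes "finite A" "finite B"
  shows "(\<Sum>a\<in>A. card {b \<in> B. P a b}) = (\<Sum>b\<in>B. card {a \<in> A. P a b})"
proof -
  have "(\<Sum>a\<in>A. card {b \<in> B. P a b}) = (\<Sum>a\<in>A. \<Sum>b\<in>B. of_bool (P a b) :: nat)"
    using card_filter_eq_sum_of_bool[OF assms(2)] by simp
  also have "\<dots> = (\<Sum>b\<in>B. \<Sum>a\<in>A. of_bool (P a b))"
    by (rule sum.swap)
  also have "\<dots> = (\<Sum>b\<in>B. card {a \<in> A. P a b})"
    using card_filter_eq_sum_of_bool[OF assms(1)] by simp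
  finally show ?thesis .
qed

lemma averaged_count_le:
  fixes m k l K P Q T c :: nat
  assumes "m * c + P + Q \<le> 3 * T" "k * P = l * c" "k * Q = l * c" "k * T = K * c"
  shows "(m * k + 2 * l) * c \<le> 3 * K * c"
proof -
  have "(m * k + 2 * l) * c = k * (m * c + P + Q)" using assms(2,3) by (simp add: algebra_simps)
  also have "\<dots> \<le> k * (3 * T)" using assms(1) by simp
  also have "\<dots> = 3 * K * c" using assms(4) by simp
  finally show ?thesis .
qed

lemma counting_inequality_fails:
  fixes m n :: nat
  assumes "4 \<le> m" "3 * m < n" "23 \<le> n"
  shows "3 * ((n - 2) + (m - 1) * (m - 2)) < m * (n - 2) + 2 * (m - 2)"
proof -
  define M N where "M = int m" and "N = int n"
  have M: "4 \<le> M" "3 * M < N" "23 \<le> N" using assms by (simp_all add: M_def N_def)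
  txt \<open>\<open>N > 3 M\<close> settles \<open>M \<ge> 8\<close>, and \<open>N \<ge> 23\<close> the cases \<open>M \<le> 7\<close>.\<close>
  have key: "(M - 2) * (3 * M - 5) < (M - 3) * (N - 2)"
  proof (cases "M \<le> 7")
    case True
    have "(M - 3) * 21 \<le> (M - 3) * (N - 2)" using M by (intro mult_left_mono) auto
    moreover have "M = 4 \<or> M = 5 \<or> M = 6 \<or> M = 7" using True M by auto
    ultimately show ?thesis by auto
  next
    case False
    have "(M - 3) * (3 * M - 1) \<le> (M - 3) * (N - 2)" using M by (intro mult_left_mono) auto
    moreover have "(M - 2) * (3 * M - 5) < (M - 3) * (3 * M - 1)" using False by (simp add: algebra_simps)
    ultimately show ?thesis by linarith
  qed
  have "int (n - 2) = N - 2" "int (m - 1) = M - 1" "int (m - 2) = M - 2"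
    using assms by (auto simp: M_def N_def)
  moreover have "3 * ((N - 2) + (M - 1) * (M - 2)) < M * (N - 2) + 2 * (M - 2)"
    using key by (simp add: algebra_simps)
  ultimately have "int (3 * ((n - 2) + (m - 1) * (m - 2))) < int (m * (n - 2) + 2 * (m - 2))"
    by (simp add: M_def)
  then show ?thesis by linarith
qed

locale finite_perm_group =
  fixes \<Omega> :: "'a set" and G :: "('a \<Rightarrow> 'a) set"
  assumes finite_domain: "finite \<Omega>" and perm_group: "perm_group \<Omega> G"
begin

lemma permutes_of_mem: "g \<in> G \<Longrightarrow> g permutes \<Omega>"
  using perm_group unfolding perm_group_def by blast

lemma id_mem: "id \<in> G"
  using perm_group unfolding perm_group_def by blast

lemma comp_mem: "g \<in> G \<Longrightarrow> h \<in> G \<Longrightarrow> g \<circ> h \<in> G"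
  using perm_group unfolding perm_group_def by blast

lemma inv_mem: "g \<in> G \<Longrightarrow> inv g \<in> G"
  using perm_group unfolding perm_group_def by blast

lemma conj_mem: "g \<in> G \<Longrightarrow> h \<in> G \<Longrightarrow> g \<circ> h \<circ> inv g \<in> G"
  using comp_mem inv_mem by blast

lemma commutator_mem: "u \<in> G \<Longrightarrow> v \<in> G \<Longrightarrow> commutator u v \<in> G"
  unfolding commutator_def using comp_mem inv_mem by blast

lemma finite_carrier: "finite G"
  by (rule finite_subset[OF _ finite_permutations[OF finite_domain]]) (auto dest: permutes_of_mem)

lemma finite_degrees: "finite {card (supp \<Omega> u) |u. u \<in> G \<and> u \<noteq> id}"
proof (rule finite_subset)
  show "{card (supp \<Omega> u) |u. u \<in> G \<and> u \<noteq> id} \<subseteq> (\<lambda>u. card (supp \<Omega> u)) ` G" by blast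
qed (rule finite_imageI[OF finite_carrier])

lemma minimal_degree_le:
  assumes "c \<in> G" "c \<noteq> id"
  shows "minimal_degree \<Omega> G \<le> card (supp \<Omega> c)"
  unfolding minimal_degree_def by (rule Min_le[OF finite_degrees]) (use assms in blast)

lemma minimal_degree_attained:
  assumes "c \<in> G" "c \<noteq> id"
  obtains u where "u \<in> G" "u \<noteq> id" "card (supp \<Omega> u) = minimal_degree \<Omega> G"
proof -
  have "minimal_degree \<Omega> G \<in> {card (supp \<Omega> u) |u. u \<in> G \<and> u \<noteq> id}"
    unfolding minimal_degree_def by (rule Min_in[OF finite_degrees]) (use assms in blast)
  then obtain u where "u \<in> G" "u \<noteq> id" "minimal_degree \<Omega> G = card (supp \<Omega> u)" by blast
  then show ?thesis using that[of u] by simp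
qed

lemma ex_non_id_mem:
  assumes tr: "t_transitive 3 \<Omega> G" and "3 \<le> card \<Omega>"
  obtains g where "g \<in> G" "g \<noteq> id"
proof -
  obtain a b c where abc: "a \<in> \<Omega>" "b \<in> \<Omega>" "c \<in> \<Omega>" "distinct [a, b, c]"
    using three_distinct_points[OF assms(2)] .
  then obtain g where "g \<in> G" "g a = b"
    using three_transitiveE[OF tr abc, of b a c] by auto
  moreover have "g \<noteq> id" using \<open>g a = b\<close> abc(4) by auto
  ultimately show ?thesis using that by blast
qed

subsection \<open>Generating the alternating group\<close>

lemma alt_subset_if_three_cycles_mem:
  assumes three_cycles: "\<And>x y z. x \<in> \<Omega> \<Longrightarrow> y \<in> \<Omega> \<Longrightarrow> z \<in> \<Omega> \<Longrightarrow> distinct [x, y, z]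
      \<Longrightarrow> transpose x y \<circ> transpose x z \<in> G"
  shows "alt_set \<Omega> \<subseteq> G"
proof
  txt \<open>An even permutation is a product of pairs of transpositions, and each such pair is a
    product of at most two 3-cycles.\<close>
  have shared: "transpose a d \<circ> transpose a b \<in> G"
    if "a \<in> \<Omega>" "b \<in> \<Omega>" "d \<in> \<Omega>" "a \<noteq> b" "a \<noteq> d" for a b d
    using three_cycles[of a d b] that id_mem by (cases "d = b") auto
  have pair: "transpose c d \<circ> transpose a b \<in> G"
    if ab: "a \<in> \<Omega>" "b \<in> \<Omega>" "a \<noteq> b" and cd: "c \<in> \<Omega>" "d \<in> \<Omega>" "c \<noteq> d" for a b c d
  proof -
    consider "c = a" | "c = b" | "d = a" | "d = b" | "c \<notin> {a, b}" "d \<notin> {a, b}" by blast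
    then show ?thesis
    proof cases
      case 5
      have "transpose c d \<circ> transpose a b = (transpose c d \<circ> transpose c a) \<circ> (transpose a c \<circ> transpose a b)"
        by (simp add: fun_eq_iff transpose_commute)
      then show ?thesis using three_cycles[of c d a] three_cycles[of a c b] ab cd 5 comp_mem by auto
    qed (use shared[of a b d] shared[of b a d] shared[of a b c] shared[of b a c] ab cd in
           \<open>simp_all add: transpose_commute\<close>)
  qed
  have "apply_transps ts \<in> G"
    if "\<forall>(a, b) \<in> set ts. a \<noteq> b \<and> a \<in> \<Omega> \<and> b \<in> \<Omega>" "even (length ts)" for ts
    using that
  proof (induction ts rule: induct_list012)
    case (3 x y zs)
    then have "transpose (fst x) (snd x) \<circ> transpose (fst y) (snd y) \<in> G"
      by (intro pair) (auto simp: case_prod_unfold)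
    moreover have "apply_transps zs \<in> G" using 3 by simp
    ultimately have "(transpose (fst x) (snd x) \<circ> transpose (fst y) (snd y)) \<circ> apply_transps zs \<in> G"
      by (rule comp_mem)
    then show ?case by (simp only: apply_transps_Cons o_assoc)
  qed (simp_all add: id_mem)
  moreover fix p
  assume "p \<in> alt_set \<Omega>"
  then have p: "p permutes \<Omega>" "evenperm p" by (simp_all add: alt_set_def)
  obtain ts where ts: "\<forall>(a, b) \<in> set ts. a \<noteq> b \<and> a \<in> \<Omega> \<and> b \<in> \<Omega>" "apply_transps ts = p"
    using permutes_from_transpositions[OF p(1) finite_domain] by blast
  moreover have "even (length ts)"
    using evenperm_apply_transps_iff[of ts] ts p(2) by (auto simp: case_prod_unfold)
  ultimately show "p \<in> G" by blast
qed

lemma alt_subset_if_three_cycle_mem: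
  assumes tr: "t_transitive 3 \<Omega> G"
    and abc: "a \<in> \<Omega>" "b \<in> \<Omega>" "c \<in> \<Omega>" "distinct [a, b, c]"
    and mem: "transpose a b \<circ> transpose a c \<in> G"
  shows "alt_set \<Omega> \<subseteq> G"
proof (rule alt_subset_if_three_cycles_mem)
  fix x y z
  assume xyz: "x \<in> \<Omega>" "y \<in> \<Omega>" "z \<in> \<Omega>" "distinct [x, y, z]"
  obtain g where g: "g \<in> G" "g a = x" "g b = y" "g c = z"
    using three_transitiveE[OF tr abc xyz] .
  have "bij g" using permutes_bij[OF permutes_of_mem[OF g(1)]] .
  then have "g \<circ> (transpose a b \<circ> transpose a c) \<circ> inv g
      = (g \<circ> transpose a b \<circ> inv g) \<circ> (g \<circ> transpose a c \<circ> inv g)"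
    by (simp add: fun_eq_iff bij_is_inj)
  also have "\<dots> = transpose x y \<circ> transpose x z"
    using \<open>bij g\<close> g by (simp add: conj_transpose)
  finally show "transpose x y \<circ> transpose x z \<in> G"
    using conj_mem[OF g(1) mem] by simp
qed

lemma alt_subset_if_small_support:
  assumes tr: "t_transitive 3 \<Omega> G" and "3 \<le> card \<Omega>"
    and u: "u \<in> G" "u \<noteq> id" and small: "card (supp \<Omega> u) \<le> 3"
  shows "alt_set \<Omega> \<subseteq> G"
proof -
  have u_perm: "u permutes \<Omega>" using permutes_of_mem[OF u(1)] .
  obtain \<alpha> where "u \<alpha> \<noteq> \<alpha>" using u(2) by (metis eq_id_iff)
  then have \<alpha>: "\<alpha> \<in> supp \<Omega> u" using permutes_fixes_iff_notin_supp[OF u_perm] by blast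
  define \<beta> where "\<beta> = u \<alpha>"
  have "\<alpha> \<in> \<Omega>" "\<beta> \<in> \<Omega>" "\<alpha> \<noteq> \<beta>"
    using \<alpha> permutes_in_image[OF u_perm] by (auto simp: supp_def \<beta>_def)
  from u_perm finite_domain small \<alpha> show ?thesis
  proof (cases rule: small_support_perm_cases)
    case transposition
    then have u_eq: "u = transpose \<alpha> \<beta>" by (simp add: \<beta>_def)
    have "finite {\<alpha>, \<beta>}" "card {\<alpha>, \<beta>} < card \<Omega>"
      using \<open>\<alpha> \<noteq> \<beta>\<close> \<open>3 \<le> card \<Omega>\<close> by simp_all
    then obtain c where c: "c \<in> \<Omega>" "c \<notin> {\<alpha>, \<beta>}" by (rule ex_not_mem_if_card_less)
    obtain g where g: "g \<in> G" "g \<alpha> = \<alpha>" "g \<beta> = c"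
      using three_transitiveE[OF tr, of \<alpha> \<beta> c \<alpha> c \<beta>] \<open>\<alpha> \<in> \<Omega>\<close> \<open>\<beta> \<in> \<Omega>\<close> \<open>\<alpha> \<noteq> \<beta>\<close> c by auto
    txt \<open>The transposition \<open>u\<close> times its conjugate \<open>g u g\<^sup>-\<^sup>1\<close> is a 3-cycle.\<close>
    have "g \<circ> u \<circ> inv g = transpose \<alpha> c"
      using u_eq g conj_transpose[OF permutes_bij[OF permutes_of_mem[OF g(1)]]] by simp
    then have "transpose \<alpha> \<beta> \<circ> transpose \<alpha> c \<in> G"
      using comp_mem[OF u(1) conj_mem[OF g(1) u(1)]] u_eq by simp
    then show ?thesis
      using alt_subset_if_three_cycle_mem[OF tr] \<open>\<alpha> \<in> \<Omega>\<close> \<open>\<beta> \<in> \<Omega>\<close> \<open>\<alpha> \<noteq> \<beta>\<close> c by auto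
  next
    case three_cycle
    define \<gamma> where "\<gamma> = u \<beta>"
    have u_eq: "u = transpose \<alpha> \<gamma> \<circ> transpose \<alpha> \<beta>" "distinct [\<alpha>, \<gamma>, \<beta>]"
      using three_cycle by (auto simp: \<beta>_def \<gamma>_def)
    have "\<gamma> \<in> \<Omega>" using permutes_in_image[OF u_perm] \<open>\<beta> \<in> \<Omega>\<close> by (simp add: \<gamma>_def)
    then show ?thesis
      using alt_subset_if_three_cycle_mem[OF tr _ _ _ u_eq(2)] u_eq(1) u(1) \<open>\<alpha> \<in> \<Omega>\<close> \<open>\<beta> \<in> \<Omega>\<close>
      by simp
  qed
qed

subsection \<open>Averaging over a transporter\<close>

definition transporter :: "'a list \<Rightarrow> 'a list \<Rightarrow> ('a \<Rightarrow> 'a) set" where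
  "transporter xs ys = {g \<in> G. map g xs = ys}"

lemma finite_transporter: "finite (transporter xs ys)"
  using finite_carrier by (simp add: transporter_def)

lemma card_transporter_le:
  assumes "s \<in> G" "map s xs' = xs" "r \<in> G" "map r ys = ys'"
  shows "card (transporter xs ys) \<le> card (transporter xs' ys')"
proof (rule card_inj_on_le)
  have s: "bij s" and r: "bij r" using assms(1,3) permutes_of_mem permutes_bij by blast+
  show "inj_on (\<lambda>g. r \<circ> g \<circ> s) (transporter xs ys)"
  proof (rule inj_onI)
    fix g h
    assume eq: "r \<circ> g \<circ> s = r \<circ> h \<circ> s"
    show "g = h"
    proof
      fix x
      have "r (g (s (inv s x))) = r (h (s (inv s x)))" using fun_cong[OF eq] by simp
      then show "g x = h x" using s r by (simp add: bij_is_inj bij_is_surj surj_f_inv_f inj_eq)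
    qed
  qed
  show "(\<lambda>g. r \<circ> g \<circ> s) ` transporter xs ys \<subseteq> transporter xs' ys'"
    using assms by (auto simp: transporter_def intro: comp_mem)
  show "finite (transporter xs' ys')" by (rule finite_transporter)
qed

lemma card_transporter_eq:
  assumes tr: "t_transitive t \<Omega> G"
    and "length xs = t" "distinct xs" "set xs \<subseteq> \<Omega>" "length ys = t" "distinct ys" "set ys \<subseteq> \<Omega>"
    and "length xs' = t" "distinct xs'" "set xs' \<subseteq> \<Omega>" "length ys' = t" "distinct ys'" "set ys' \<subseteq> \<Omega>"
  shows "card (transporter xs ys) = card (transporter xs' ys')"
proof -
  have "card (transporter as bs) \<le> card (transporter as' bs')"
    if lists: "length as = t" "distinct as" "set as \<subseteq> \<Omega>" "length bs = t" "distinct bs" "set bs \<subseteq> \<Omega>"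
      "length as' = t" "distinct as'" "set as' \<subseteq> \<Omega>" "length bs' = t" "distinct bs'" "set bs' \<subseteq> \<Omega>"
    for as bs as' bs'
  proof -
    obtain s where "s \<in> G" "map s as' = as"
      using t_transitiveE[OF tr lists(7,1,8,2,9,3)] by blast
    moreover obtain r where "r \<in> G" "map r bs = bs'"
      using t_transitiveE[OF tr lists(4,10,5,11,6,12)] by blast
    ultimately show ?thesis by (rule card_transporter_le)
  qed
  from this[OF assms(2-13)] this[OF assms(8-13) assms(2-7)] show ?thesis
    by (rule antisym)
qed

lemma card_transporter_pos:
  assumes tr: "t_transitive 3 \<Omega> G" and "3 \<le> card \<Omega>"
    and "\<alpha> \<in> \<Omega>" "\<beta> \<in> \<Omega>" "\<gamma> \<in> \<Omega>" "\<alpha> \<noteq> \<beta>" "\<alpha> \<noteq> \<gamma>"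
  shows "0 < card (transporter [\<alpha>, \<gamma>] [\<alpha>, \<beta>])"
proof -
  have "finite {\<alpha>, \<gamma>}" "card {\<alpha>, \<gamma>} < card \<Omega>" using assms(2) by (simp_all add: card_insert_if)
  then obtain x where x: "x \<in> \<Omega>" "x \<notin> {\<alpha>, \<gamma>}" by (rule ex_not_mem_if_card_less)
  have "finite {\<alpha>, \<beta>}" "card {\<alpha>, \<beta>} < card \<Omega>" using assms(2) by (simp_all add: card_insert_if)
  then obtain y where y: "y \<in> \<Omega>" "y \<notin> {\<alpha>, \<beta>}" by (rule ex_not_mem_if_card_less)
  obtain g where "g \<in> G" "g \<alpha> = \<alpha>" "g \<gamma> = \<beta>"
    using three_transitiveE[OF tr, of \<alpha> \<gamma> x \<alpha> \<beta> y] x y assms(3-) by auto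
  then have "g \<in> transporter [\<alpha>, \<gamma>] [\<alpha>, \<beta>]" by (simp add: transporter_def)
  then show ?thesis using finite_transporter card_gt_0_iff by blast
qed

lemma transporter_apply_notin:
  assumes "g \<in> transporter [\<alpha>, \<gamma>] [\<alpha>, \<beta>]" "x \<in> \<Omega>" "x \<noteq> \<alpha>" "x \<noteq> \<gamma>"
  shows "g x \<in> \<Omega> - {\<alpha>, \<beta>}"
proof -
  have g: "g permutes \<Omega>" "g \<alpha> = \<alpha>" "g \<gamma> = \<beta>"
    using assms(1) permutes_of_mem by (auto simp: transporter_def)
  then have "g x \<noteq> \<alpha>" "g x \<noteq> \<beta>" using assms(3,4) permutes_inj[OF g(1)] by (metis injD)+
  then show ?thesis using permutes_in_image[OF g(1)] assms(2) by simp
qed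

lemma card_transporter_maps_into:
  assumes tr: "t_transitive 3 \<Omega> G"
    and "\<alpha> \<in> \<Omega>" "\<beta> \<in> \<Omega>" "\<gamma> \<in> \<Omega>" "\<alpha> \<noteq> \<beta>" "\<alpha> \<noteq> \<gamma>"
    and x: "x \<in> \<Omega>" "x \<noteq> \<alpha>" "x \<noteq> \<gamma>" and Y: "Y \<subseteq> \<Omega> - {\<alpha>, \<beta>}"
  shows "(card \<Omega> - 2) * card {g \<in> transporter [\<alpha>, \<gamma>] [\<alpha>, \<beta>]. g x \<in> Y}
    = card Y * card (transporter [\<alpha>, \<gamma>] [\<alpha>, \<beta>])"
proof -
  let ?C = "transporter [\<alpha>, \<gamma>] [\<alpha>, \<beta>]"
  txt \<open>The fibre over \<open>y\<close> of \<open>g \<mapsto> g x\<close> is a transporter of triples, so all fibres have the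
    same size.\<close>
  define F where "F y = card (transporter [\<alpha>, \<gamma>, x] [\<alpha>, \<beta>, y])" for y
  have F_eq: "F y = F y'" if "y \<in> \<Omega> - {\<alpha>, \<beta>}" "y' \<in> \<Omega> - {\<alpha>, \<beta>}" for y y'
    unfolding F_def using that assms(2-9) by (intro card_transporter_eq[OF tr]) auto
  have card_maps_into: "card {g \<in> ?C. g x \<in> Z} = (\<Sum>y\<in>Z. F y)" if "Z \<subseteq> \<Omega>" for Z
  proof -
    have "{g \<in> ?C. g x \<in> Z} = (\<Union>y\<in>Z. transporter [\<alpha>, \<gamma>, x] [\<alpha>, \<beta>, y])"
      by (auto simp: transporter_def)
    also have "card \<dots> = (\<Sum>y\<in>Z. F y)" unfolding F_def
      using finite_subset[OF that finite_domain] finite_carrier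
      by (intro card_UN_disjoint) (auto simp: transporter_def)
    finally show ?thesis .
  qed
  have card_rest: "card (\<Omega> - {\<alpha>, \<beta>}) = card \<Omega> - 2"
    using assms(2-5) finite_domain by (simp add: card_Diff_subset)
  have "card {\<alpha>, \<gamma>, x} \<le> card \<Omega>"
    using assms(2,4) x finite_domain by (intro card_mono) auto
  then have "0 < card (\<Omega> - {\<alpha>, \<beta>})" using card_rest assms(6) x by (simp add: card_insert_if)
  then obtain y\<^sub>0 where y\<^sub>0: "y\<^sub>0 \<in> \<Omega> - {\<alpha>, \<beta>}" by (metis card_gt_0_iff ex_in_conv)
  have sum_const: "(\<Sum>y\<in>Z. F y) = card Z * F y\<^sub>0" if "Z \<subseteq> \<Omega> - {\<alpha>, \<beta>}" for Z
    using F_eq[OF _ y\<^sub>0] that by (simp add: subset_iff)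
  have "?C = {g \<in> ?C. g x \<in> \<Omega> - {\<alpha>, \<beta>}}" using transporter_apply_notin x by blast
  then have "card ?C = (card \<Omega> - 2) * F y\<^sub>0"
    using card_maps_into[of "\<Omega> - {\<alpha>, \<beta>}"] sum_const[of "\<Omega> - {\<alpha>, \<beta>}"] card_rest by simp
  moreover have "card {g \<in> ?C. g x \<in> Y} = card Y * F y\<^sub>0"
    using card_maps_into[of Y] sum_const[OF Y] Y by auto
  ultimately show ?thesis by simp
qed

lemma card_transporter_maps_within:
  assumes tr: "t_transitive 3 \<Omega> G" and S: "S \<subseteq> \<Omega>" "\<alpha> \<in> S" "\<beta> \<in> S" "\<alpha> \<noteq> \<beta>"
    and \<gamma>: "\<gamma> \<in> \<Omega>" "\<gamma> \<notin> S" and x: "x \<in> S" "x \<noteq> \<alpha>"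
  shows "(card \<Omega> - 2) * card {g \<in> transporter [\<alpha>, \<gamma>] [\<alpha>, \<beta>]. g x \<in> S}
    = (card S - 2) * card (transporter [\<alpha>, \<gamma>] [\<alpha>, \<beta>])"
proof -
  have "\<alpha> \<in> \<Omega>" "\<beta> \<in> \<Omega>" "x \<in> \<Omega>" "\<alpha> \<noteq> \<gamma>" "x \<noteq> \<gamma>" "S - {\<alpha>, \<beta>} \<subseteq> \<Omega> - {\<alpha>, \<beta>}"
    using S x \<gamma> by auto
  then have "{g \<in> transporter [\<alpha>, \<gamma>] [\<alpha>, \<beta>]. g x \<in> S}
      = {g \<in> transporter [\<alpha>, \<gamma>] [\<alpha>, \<beta>]. g x \<in> S - {\<alpha>, \<beta>}}"
    using transporter_apply_notin x(2) by blast
  moreover have "card (S - {\<alpha>, \<beta>}) = card S - 2"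
    using S finite_subset[OF S(1) finite_domain] by (simp add: card_Diff_subset)
  ultimately show ?thesis
    using card_transporter_maps_into[OF tr \<open>\<alpha> \<in> \<Omega>\<close> \<open>\<beta> \<in> \<Omega>\<close> \<gamma>(1) S(4) \<open>\<alpha> \<noteq> \<gamma>\<close> \<open>x \<in> \<Omega>\<close> x(2)
        \<open>x \<noteq> \<gamma>\<close> \<open>S - {\<alpha>, \<beta>} \<subseteq> \<Omega> - {\<alpha>, \<beta>}\<close>]
    by simp
qed

lemma sum_card_overlap_transporter:
  assumes tr: "t_transitive 3 \<Omega> G" and S: "S \<subseteq> \<Omega>" "\<alpha> \<in> S" "\<beta> \<in> S" "\<alpha> \<noteq> \<beta>"
    and \<gamma>: "\<gamma> \<in> \<Omega>" "\<gamma> \<notin> S"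
  shows "(card \<Omega> - 2) * (\<Sum>g\<in>transporter [\<alpha>, \<gamma>] [\<alpha>, \<beta>]. card {x \<in> S. g x \<in> S})
    = ((card \<Omega> - 2) + (card S - 1) * (card S - 2)) * card (transporter [\<alpha>, \<gamma>] [\<alpha>, \<beta>])"
proof -
  let ?C = "transporter [\<alpha>, \<gamma>] [\<alpha>, \<beta>]"
  have "finite S" using finite_subset[OF S(1) finite_domain] .
  have "(\<Sum>g\<in>?C. card {x \<in> S. g x \<in> S}) = (\<Sum>x\<in>S. card {g \<in> ?C. g x \<in> S})"
    by (rule sum_card_filter_swap[OF finite_transporter \<open>finite S\<close>])
  also have "\<dots> = card {g \<in> ?C. g \<alpha> \<in> S} + (\<Sum>x\<in>S - {\<alpha>}. card {g \<in> ?C. g x \<in> S})"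
    by (rule sum.remove[OF \<open>finite S\<close> S(2)])
  also have "{g \<in> ?C. g \<alpha> \<in> S} = ?C" using S(2) by (auto simp: transporter_def)
  finally have "(\<Sum>g\<in>?C. card {x \<in> S. g x \<in> S}) = card ?C + (\<Sum>x\<in>S - {\<alpha>}. card {g \<in> ?C. g x \<in> S})" .
  moreover have "(\<Sum>x\<in>S - {\<alpha>}. (card \<Omega> - 2) * card {g \<in> ?C. g x \<in> S})
      = (card S - 1) * ((card S - 2) * card ?C)"
    using card_transporter_maps_within[OF tr S \<gamma>] \<open>finite S\<close> S(2) by simp
  ultimately show ?thesis by (simp add: algebra_simps sum_distrib_left)
qed

lemma card_supp_le_overlap:
  assumes u: "u \<in> G" and minimal: "\<And>c. c \<in> G \<Longrightarrow> c \<noteq> id \<Longrightarrow> card (supp \<Omega> u) \<le> card (supp \<Omega> c)"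
    and g: "g \<in> G" and \<alpha>: "\<alpha> \<in> supp \<Omega> u" "g \<alpha> = \<alpha>" and \<gamma>: "\<gamma> \<notin> supp \<Omega> u" "g \<gamma> = u \<alpha>"
  shows "card (supp \<Omega> u) + of_bool (g (u \<alpha>) \<in> supp \<Omega> u) + of_bool (g (inv u \<alpha>) \<in> supp \<Omega> u)
    \<le> 3 * card {x \<in> supp \<Omega> u. g x \<in> supp \<Omega> u}"
proof -
  let ?S = "supp \<Omega> u"
  have u_perm: "u permutes \<Omega>" and g_perm: "g permutes \<Omega>" using u g permutes_of_mem by blast+
  note mem_iff = permutes_mem_supp_iff[OF u_perm] and fix_iff = permutes_fixes_iff_notin_supp[OF u_perm]
  define v where "v = inv g \<circ> u \<circ> g"
  have "v \<in> G" unfolding v_def using comp_mem[OF comp_mem[OF inv_mem[OF g] u] g] .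
  then have v_perm: "v permutes \<Omega>" by (rule permutes_of_mem)
  define D where "D = ?S \<inter> supp \<Omega> v"
  have D_eq: "D = {x \<in> ?S. g x \<in> ?S}"
    unfolding D_def v_def supp_conj[OF g_perm u_perm] by (auto simp: supp_def)
  have "u \<alpha> \<noteq> \<alpha>" "u \<gamma> = \<gamma>" using \<alpha>(1) \<gamma>(1) fix_iff by blast+
  moreover have "v \<alpha> = \<gamma>"
    by (simp add: v_def \<alpha>(2) \<gamma>(2)[symmetric] permutes_inverses[OF g_perm])
  ultimately have "commutator u v \<noteq> id"
    using commutator_neq_id[OF u_perm v_perm] by simp
  with commutator_mem[OF u \<open>v \<in> G\<close>] have "card ?S \<le> card (supp \<Omega> (commutator u v))"
    by (rule minimal)
  moreover have "card (supp \<Omega> (commutator u v)) + card (D \<inter> u ` D) \<le> 3 * card D"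
    unfolding D_def by (rule card_supp_commutator_le[OF finite_domain u_perm v_perm])
  moreover have "of_bool (g (u \<alpha>) \<in> ?S) + of_bool (g (inv u \<alpha>) \<in> ?S) \<le> card (D \<inter> u ` D)"
  proof (rule of_bool_add_of_bool_le_card)
    show "finite (D \<inter> u ` D)" using finite_domain by (simp add: D_def supp_def)
    have "\<alpha> \<in> D" using \<alpha> by (simp add: D_eq)
    then show "u \<alpha> \<in> D \<inter> u ` D" if "g (u \<alpha>) \<in> ?S"
      using that \<alpha>(1) mem_iff by (simp add: D_eq)
    have "u (inv u \<alpha>) = \<alpha>" using permutes_inverses(1)[OF u_perm] .
    then show "\<alpha> \<in> D \<inter> u ` D" if "g (inv u \<alpha>) \<in> ?S"
      using that \<alpha>(1) mem_iff[of "inv u \<alpha>"] \<open>\<alpha> \<in> D\<close> by (auto simp: D_eq intro: rev_image_eqI)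
  qed (use \<open>u \<alpha> \<noteq> \<alpha>\<close> in simp)
  ultimately show ?thesis by (simp add: D_eq)
qed

lemma sum_card_overlap_ge:
  assumes u: "u \<in> G" and minimal: "\<And>c. c \<in> G \<Longrightarrow> c \<noteq> id \<Longrightarrow> card (supp \<Omega> u) \<le> card (supp \<Omega> c)"
    and \<alpha>: "\<alpha> \<in> supp \<Omega> u" and \<gamma>: "\<gamma> \<notin> supp \<Omega> u"
  defines "S \<equiv> supp \<Omega> u" and "C \<equiv> transporter [\<alpha>, \<gamma>] [\<alpha>, u \<alpha>]"
  shows "card S * card C + card {g \<in> C. g (u \<alpha>) \<in> S} + card {g \<in> C. g (inv u \<alpha>) \<in> S}
    \<le> 3 * (\<Sum>g\<in>C. card {x \<in> S. g x \<in> S})"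
proof -
  have "card S * card C + card {g \<in> C. g (u \<alpha>) \<in> S} + card {g \<in> C. g (inv u \<alpha>) \<in> S}
      = (\<Sum>g\<in>C. card S + of_bool (g (u \<alpha>) \<in> S) + of_bool (g (inv u \<alpha>) \<in> S))"
    by (simp add: C_def sum.distrib card_filter_eq_sum_of_bool[OF finite_transporter] mult.commute)
  also have "\<dots> \<le> (\<Sum>g\<in>C. 3 * card {x \<in> S. g x \<in> S})"
  proof (rule sum_mono)
    fix g
    assume "g \<in> C"
    then show "card S + of_bool (g (u \<alpha>) \<in> S) + of_bool (g (inv u \<alpha>) \<in> S) \<le> 3 * card {x \<in> S. g x \<in> S}"
      using card_supp_le_overlap[OF u minimal, of g \<alpha> \<gamma>] \<alpha> \<gamma>
      by (simp add: C_def S_def transporter_def)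
  qed
  also have "\<dots> = 3 * (\<Sum>g\<in>C. card {x \<in> S. g x \<in> S})"
    by (simp add: sum_distrib_left)
  finally show ?thesis .
qed

lemma counting_inequality:
  assumes tr: "t_transitive 3 \<Omega> G" and u: "u \<in> G" "u \<noteq> id"
    and minimal: "\<And>c. c \<in> G \<Longrightarrow> c \<noteq> id \<Longrightarrow> card (supp \<Omega> u) \<le> card (supp \<Omega> c)"
    and proper: "supp \<Omega> u \<noteq> \<Omega>"
  defines "m \<equiv> card (supp \<Omega> u)" and "n \<equiv> card \<Omega>"
  shows "m * (n - 2) + 2 * (m - 2) \<le> 3 * ((n - 2) + (m - 1) * (m - 2))"
proof -
  let ?S = "supp \<Omega> u"
  have u_perm: "u permutes \<Omega>" using permutes_of_mem[OF u(1)] .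
  have S: "?S \<subseteq> \<Omega>" by (auto simp: supp_def)
  note mem_iff = permutes_mem_supp_iff[OF u_perm] and fix_iff = permutes_fixes_iff_notin_supp[OF u_perm]
  obtain \<alpha> where "u \<alpha> \<noteq> \<alpha>" using u(2) by (metis eq_id_iff)
  then have \<alpha>: "\<alpha> \<in> ?S" using fix_iff by blast
  have \<beta>: "u \<alpha> \<in> ?S" "\<alpha> \<noteq> u \<alpha>" using \<alpha> \<open>u \<alpha> \<noteq> \<alpha>\<close> mem_iff by auto
  have "u (inv u \<alpha>) = \<alpha>" using permutes_inverses(1)[OF u_perm] .
  then have \<alpha>': "inv u \<alpha> \<in> ?S" "inv u \<alpha> \<noteq> \<alpha>" using \<alpha> \<open>u \<alpha> \<noteq> \<alpha>\<close> mem_iff[of "inv u \<alpha>"] by auto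
  obtain \<gamma> where \<gamma>: "\<gamma> \<in> \<Omega>" "\<gamma> \<notin> ?S" using proper S by blast
  let ?C = "transporter [\<alpha>, \<gamma>] [\<alpha>, u \<alpha>]"
  have "card {\<alpha>, u \<alpha>, \<gamma>} \<le> n"
    unfolding n_def using \<alpha> \<beta> \<gamma> S finite_domain by (intro card_mono) auto
  then have "3 \<le> n" using \<alpha> \<beta> \<gamma> by (auto simp: card_insert_if split: if_splits)
  then have "0 < card ?C"
    using card_transporter_pos[OF tr] \<alpha> \<beta> \<gamma> S unfolding n_def by blast
  note maps_within = card_transporter_maps_within[OF tr S \<alpha> \<beta> \<gamma>, folded m_def n_def]
  have "(m * (n - 2) + 2 * (m - 2)) * card ?C \<le> 3 * ((n - 2) + (m - 1) * (m - 2)) * card ?C"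
  proof (rule averaged_count_le)
    show "m * card ?C + card {g \<in> ?C. g (u \<alpha>) \<in> ?S} + card {g \<in> ?C. g (inv u \<alpha>) \<in> ?S}
        \<le> 3 * (\<Sum>g\<in>?C. card {x \<in> ?S. g x \<in> ?S})"
      unfolding m_def by (rule sum_card_overlap_ge[OF u(1) minimal \<alpha> \<gamma>(2)])
    show "(n - 2) * card {g \<in> ?C. g (u \<alpha>) \<in> ?S} = (m - 2) * card ?C"
      by (rule maps_within[OF \<beta>(1) \<open>u \<alpha> \<noteq> \<alpha>\<close>])
    show "(n - 2) * card {g \<in> ?C. g (inv u \<alpha>) \<in> ?S} = (m - 2) * card ?C"
      by (rule maps_within[OF \<alpha>'])
    show "(n - 2) * (\<Sum>g\<in>?C. card {x \<in> ?S. g x \<in> ?S}) = ((n - 2) + (m - 1) * (m - 2)) * card ?C"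
      by (rule sum_card_overlap_transporter[OF tr S \<alpha> \<beta> \<gamma>, folded m_def n_def])
  qed
  then show ?thesis using \<open>0 < card ?C\<close> by simp
qed

end

theorem theorem3p2:
  fixes \<Omega> :: "'a set" and G :: "('a \<Rightarrow> 'a) set" and n t :: nat
  assumes "finite \<Omega>" and "card \<Omega> = n"
    and "perm_group \<Omega> G"
    and "t_transitive t \<Omega> G" and "3 \<le> t" and "t \<le> n"
    and "\<not> alt_set \<Omega> \<subseteq> G"
    and "n \<ge> 23"
  shows "real (minimal_degree \<Omega> G) \<ge> real n / 3"
proof -
  interpret finite_perm_group \<Omega> G using assms(1,3) by unfold_locales
  let ?m = "minimal_degree \<Omega> G"
  have tr: "t_transitive 3 \<Omega> G" using t_transitive_mono assms(1,2,4-6) by blast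
  have "3 \<le> card \<Omega>" using assms(2,8) by simp
  obtain u where u: "u \<in> G" "u \<noteq> id" "card (supp \<Omega> u) = ?m"
    using ex_non_id_mem[OF tr \<open>3 \<le> card \<Omega>\<close>] minimal_degree_attained by metis
  have minimal: "card (supp \<Omega> u) \<le> card (supp \<Omega> c)" if "c \<in> G" "c \<noteq> id" for c
    using minimal_degree_le[OF that] u(3) by simp
  have "4 \<le> ?m"
    using alt_subset_if_small_support[OF tr \<open>3 \<le> card \<Omega>\<close> u(1,2)] u(3) assms(7) by fastforce
  show ?thesis
  proof (rule ccontr)
    assume "\<not> ?thesis"
    then have "3 * ?m < n" by simp
    then have "supp \<Omega> u \<noteq> \<Omega>" using u(3) assms(2) by auto
    from counting_inequality[OF tr u(1,2) minimal this] show False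
      using counting_inequality_fails[OF \<open>4 \<le> ?m\<close> \<open>3 * ?m < n\<close> assms(8)] u(3) assms(2) by simp
  qed
qed

end
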